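(* Every right coideal $\mathcal{X}$ of $\mathcal{U}$ is the direct sum $\mathcal{X}=\bigoplus_{\mu\in\mathbb{C}^\times}[\mathcal{X}]_\mu$ of its homogeneous components $[\mathcal{X}]_\mu:=\mathcal{X}\cap[\mathcal{U}]_\mu$, where $[\mathcal{U}]_\mu:=\mathrm{Lin}\{F^{(i)}f_\mu E^{(j)}G^{(k)}: i,j,k\in\mathbb{N}_0\}$.
   Context: Let $q\in\mathbb{C}$ be transcendental (in particular $q\ne0$ and not a root of unity). $\mathcal{U}$ is the unital algebra generated by $E,F,G$ and $f_\mu$ ($\mu\in\mathbb{C}^\times$) with relations $f_\mu f_\nu=f_{\mu\nu}$, $f_\mu E=\mu^2Ef_\mu$, $f_\mu F=\mu^{-2}Ff_\mu$, $f_\mu G=Gf_\mu$, $GE=E(G+2)$, $GF=F(G-2)$, $EF-FE=(f_q-f_{q^{-1}})/(q-q^{-1})$; $f_1=1$. Fix $q^{1/2}$ and put $K=f_{q^{1/2}}$. $\mathcal{U}$ is a Hopf algebra with $\Delta E=E\otimes K+K^{-1}\otimes E$, $\Delta F=F\otimes K+K^{-1}\otimes F$, $\Delta G=1\otimes G+G\otimes1$, $\Delta f_\mu=f_\mu\otimes f_\mu$. Let $[k]=(q^k-q^{-k})/(q-q^{-1})$, $[k]!=[k]\cdots[1]$, $[0]!=1$, and $F^{(k)}=F^kK^{-k}/[k]!$, $E^{(k)}=K^{-k}E^k/[k]!$, $G^{(k)}=G^k/k!$. The elements $F^{(i)}f_\mu E^{(j)}G^{(k)}$ form a basis of $\mathcal{U}$.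 A right coideal is a subspace $\mathcal{X}$ with $\Delta(\mathcal{X})\subset\mathcal{X}\otimes\mathcal{U}$. *)

theory Defs
  imports "HOL-Computational_Algebra.Polynomial" "HOL-Library.Poly_Mapping"
begin

(* Nonzero complex numbers: the index set C^x of the generators f_mu. *)
typedef nzc = "{z::complex. z \<noteq> 0}" by (rule exI[of _ 1]) simp

definition nzc_mult :: "nzc \<Rightarrow> nzc \<Rightarrow> nzc" where
  "nzc_mult a b = Abs_nzc (Rep_nzc a * Rep_nzc b)"

definition nzc_of :: "complex \<Rightarrow> nzc" where
  "nzc_of z = Abs_nzc z"   (* only used with z \<noteq> 0 *)

datatype gen = GE | GF | GG | Gf nzc

(* Free algebra A = C<gen> : finitely supported functions on words *)
type_synonym falg = "gen list \<Rightarrow>\<^sub>0 complex"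
(* A \<otimes> A, with basis pairs of words *)
type_synonym falg2 = "(gen list \<times> gen list) \<Rightarrow>\<^sub>0 complex"

definition smul :: "complex \<Rightarrow> ('w \<Rightarrow>\<^sub>0 complex) \<Rightarrow> ('w \<Rightarrow>\<^sub>0 complex)" where
  "smul c p = (\<Sum>w\<in>Poly_Mapping.keys p. Poly_Mapping.single w (c * Poly_Mapping.lookup p w))"

definition csubspace :: "('w \<Rightarrow>\<^sub>0 complex) set \<Rightarrow> bool" where
  "csubspace S \<longleftrightarrow> 0 \<in> S \<and> (\<forall>x\<in>S. \<forall>y\<in>S. x + y \<in> S) \<and> (\<forall>c. \<forall>x\<in>S. smul c x \<in> S)"

definition cspan :: "('w \<Rightarrow>\<^sub>0 complex) set \<Rightarrow> ('w \<Rightarrow>\<^sub>0 complex) set" where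
  "cspan B = \<Inter>{S. csubspace S \<and> B \<subseteq> S}"

definition wd :: "gen list \<Rightarrow> falg" where
  "wd w = Poly_Mapping.single w 1"

definition amult :: "falg \<Rightarrow> falg \<Rightarrow> falg" (infixl "\<cdot>" 70) where
  "amult p r = (\<Sum>u\<in>Poly_Mapping.keys p. \<Sum>v\<in>Poly_Mapping.keys r. Poly_Mapping.single (u @ v) (Poly_Mapping.lookup p u * Poly_Mapping.lookup r v))"

definition tmult :: "falg2 \<Rightarrow> falg2 \<Rightarrow> falg2" where
  "tmult p r = (\<Sum>u\<in>Poly_Mapping.keys p. \<Sum>v\<in>Poly_Mapping.keys r.
      Poly_Mapping.single (fst u @ fst v, snd u @ snd v) (Poly_Mapping.lookup p u * Poly_Mapping.lookup r v))"

definition tens :: "falg \<Rightarrow> falg \<Rightarrow> falg2" where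
  "tens x y = (\<Sum>u\<in>Poly_Mapping.keys x. \<Sum>v\<in>Poly_Mapping.keys y. Poly_Mapping.single (u, v) (Poly_Mapping.lookup x u * Poly_Mapping.lookup y v))"

(* Defining relations of U (as elements of the free algebra), for parameter q *)
definition rels :: "complex \<Rightarrow> falg set" where
  "rels q =
     {wd [Gf m, Gf n] - wd [Gf (nzc_mult m n)] | m n. True}
   \<union> {wd [Gf (nzc_of 1)] - wd []}
   \<union> {wd [Gf m, GE] - smul ((Rep_nzc m)^2) (wd [GE, Gf m]) | m. True}
   \<union> {wd [Gf m, GF] - smul (inverse ((Rep_nzc m)^2)) (wd [GF, Gf m]) | m. True}
   \<union> {wd [Gf m, GG] - wd [GG, Gf m] | m. True}
   \<union> {wd [GG, GE] - wd [GE, GG] - smul 2 (wd [GE])}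
   \<union> {wd [GG, GF] - wd [GF, GG] + smul 2 (wd [GF])}
   \<union> {wd [GE, GF] - wd [GF, GE]
        - smul (inverse (q - inverse q)) (wd [Gf (nzc_of q)] - wd [Gf (nzc_of (inverse q))])}"

(* The two-sided ideal generated by the relations; U = A / relideal q *)
definition relideal :: "complex \<Rightarrow> falg set" where
  "relideal q = cspan {wd u \<cdot> r \<cdot> wd v | u v r. r \<in> rels q}"

(* Coproduct on generators, with K = f_s, s = q^(1/2) *)
definition Delta_gen :: "complex \<Rightarrow> gen \<Rightarrow> falg2" where
  "Delta_gen s g = (case g of
      GE \<Rightarrow> Poly_Mapping.single ([GE], [Gf (nzc_of s)]) 1
            + Poly_Mapping.single ([Gf (nzc_of (inverse s))], [GE]) 1
    | GF \<Rightarrow> Poly_Mapping.single ([GF], [Gf (nzc_of s)]) 1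
            + Poly_Mapping.single ([Gf (nzc_of (inverse s))], [GF]) 1
    | GG \<Rightarrow> Poly_Mapping.single ([], [GG]) 1 + Poly_Mapping.single ([GG], []) 1
    | Gf m \<Rightarrow> Poly_Mapping.single ([Gf m], [Gf m]) 1)"

fun Delta_word :: "complex \<Rightarrow> gen list \<Rightarrow> falg2" where
  "Delta_word s [] = Poly_Mapping.single ([], []) 1"
| "Delta_word s (g # w) = tmult (Delta_gen s g) (Delta_word s w)"

definition Delta :: "complex \<Rightarrow> falg \<Rightarrow> falg2" where
  "Delta s p = (\<Sum>w\<in>Poly_Mapping.keys p. smul (Poly_Mapping.lookup p w) (Delta_word s w))"

definition qint :: "complex \<Rightarrow> nat \<Rightarrow> complex" where
  "qint q k = (q ^ k - inverse (q ^ k)) / (q - inverse q)"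

definition qfact :: "complex \<Rightarrow> nat \<Rightarrow> complex" where
  "qfact q k = (\<Prod>i\<in>{1..k}. qint q i)"

(* Representative in A of the PBW element F^(i) f_mu E^(j) G^(k), where
   F^(i) = F^i K^-i/[i]!, E^(j) = K^-j E^j/[j]!, G^(k) = G^k/k!, K = f_s *)
definition pbw :: "complex \<Rightarrow> nat \<Rightarrow> nzc \<Rightarrow> nat \<Rightarrow> nat \<Rightarrow> falg" where
  "pbw s i m j k =
     smul (inverse (qfact (s^2) i * qfact (s^2) j * of_nat (fact k)))
       (wd (replicate i GF @ replicate i (Gf (nzc_of (inverse s))) @ [Gf m]
            @ replicate j (Gf (nzc_of (inverse s))) @ replicate j GE @ replicate k GG))"

(* Preimage in A of the homogeneous component [U]_mu *)
definition Uhom :: "complex \<Rightarrow> nzc \<Rightarrow> falg set" where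
  "Uhom s m = cspan ({pbw s i m j k | i j k. True} \<union> relideal (s^2))"

(* Preimage in A of a right coideal: Delta(X) \<subseteq> X \<otimes> U, i.e. in A \<otimes> A,
   Delta(Xt) \<subseteq> Xt \<otimes> A + A \<otimes> I *)
definition right_coideal :: "complex \<Rightarrow> falg set \<Rightarrow> bool" where
  "right_coideal s Xt \<longleftrightarrow>
     csubspace Xt \<and> relideal (s^2) \<subseteq> Xt \<and>
     (\<forall>x\<in>Xt. Delta s x \<in> cspan ({tens y (wd w) | y w. y \<in> Xt}
                                   \<union> {tens (wd w) z | w z. z \<in> relideal (s^2)}))"

end

theory Submission
  imports Defs "HOL-Library.Product_Plus"
begin

text \<open>Let A be the free algebra on E, F, G, f_\<mu> and I the ideal of the relations, so that
  U = A/I. Straightening a generator times a PBW monomial F^i f_m E^j G^k with the relations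
  turns the span V of these monomials into an A-module on which the relations act trivially;
  so the coordinate map p \<mapsto> p \<cdot> 1 \<in> V kills I. Conversely every word straightens modulo I
  into normal words F^i f_m E^j G^k, hence x \<equiv> lift (coordinates of x) mod I: the normal
  words are a basis of U. The element F^(i) f_\<mu> E^(j) G^(k) is a multiple of the normal
  word with m = \<mu> s^-(i+j), so grading (i, m, j, k) by m s^(i+j) the components [U]_\<mu>
  have coordinates in distinct degrees, which gives directness.

  For a right coideal X and x \<in> X, apply id \<otimes> \<phi>_\<mu> to \<Delta> x, where \<phi>_\<mu> reads off the
  coordinate of f_\<mu>. In \<Delta>(F^i f_m E^j G^k) every summand except
  F^i f_m E^j G^k \<otimes> K^i f_m K^j has a right factor that already is, up to a scalar, a PBW
  monomial containing E, F or G. So id \<otimes> \<phi>_\<mu> extracts the degree-\<mu> part of the normal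
  form of x, which differs from x by an element of I \<subseteq> X, and this part lies in X because
  \<Delta> X \<subseteq> X \<otimes> U.\<close>

abbreviation lookup :: "('a \<Rightarrow>\<^sub>0 'b::zero) \<Rightarrow> 'a \<Rightarrow> 'b" where
  "lookup \<equiv> Poly_Mapping.lookup"
abbreviation single :: "'a \<Rightarrow> 'b::zero \<Rightarrow> 'a \<Rightarrow>\<^sub>0 'b" where
  "single \<equiv> Poly_Mapping.single"
abbreviation keys :: "('a \<Rightarrow>\<^sub>0 'b::zero) \<Rightarrow> 'a set" where
  "keys \<equiv> Poly_Mapping.keys"

section \<open>Linear algebra of finitely supported functions\<close>

lemma poly_mapping_sum_single: "p = (\<Sum>a\<in>keys p. single a (lookup p a))"
proof (rule poly_mapping_eqI)
  fix k
  have "(\<Sum>a\<in>keys p. lookup (single a (lookup p a)) k) = (\<Sum>a\<in>keys p. if a = k then lookup p k else 0)"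
    by (rule sum.cong) (auto simp: lookup_single when_def)
  then show "lookup p k = lookup (\<Sum>a\<in>keys p. single a (lookup p a)) k"
    by (simp add: lookup_sum in_keys_iff)
qed

lemma poly_mapping_induct [case_names zero single add]:
  fixes p :: "'a \<Rightarrow>\<^sub>0 'b::comm_monoid_add"
  assumes "P 0" "\<And>a c. P (single a c)" "\<And>p r. P p \<Longrightarrow> P r \<Longrightarrow> P (p + r)"
  shows "P p"
proof -
  have "P (\<Sum>a\<in>A. single a (lookup p a))" if "finite A" for A
    using that by (induction A rule: finite_induct) (auto intro: assms)
  then show ?thesis by (subst poly_mapping_sum_single) simp
qed

lemma lookup_smul [simp]: "lookup (smul c p) w = c * lookup p w"
proof -
  have "lookup (smul c p) w = (\<Sum>u\<in>keys p. if u = w then c * lookup p w else 0)"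
    unfolding smul_def lookup_sum by (rule sum.cong) (auto simp: lookup_single when_def)
  then show ?thesis by (simp add: in_keys_iff)
qed

lemma smul_add: "smul c (p + r) = smul c p + smul c r"
  and smul_add_left: "smul (c + d) p = smul c p + smul d p"
  and smul_diff: "smul c (p - r) = smul c p - smul c r"
  and smul_minus_left: "smul (- c) p = - smul c p"
  and smul_smul [simp]: "smul c (smul d p) = smul (c * d) p"
  and smul_zero [simp]: "smul c 0 = 0"
  and smul_zero_left [simp]: "smul 0 p = 0"
  and smul_one [simp]: "smul 1 p = p"
  and smul_single [simp]: "smul c (single a d) = single a (c * d)"
  by (rule poly_mapping_eqI; simp add: lookup_add lookup_minus lookup_single when_def algebra_simps)+

lemma smul_sum: "smul c (sum f A) = (\<Sum>a\<in>A. smul c (f a))"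
  by (induction A rule: infinite_finite_induct) (auto simp: smul_add)

lemma keys_smul_subset: "keys (smul c v) \<subseteq> keys v"
  by (auto simp: in_keys_iff)

lemma csubspace_cspan: "csubspace (cspan B)"
  unfolding csubspace_def cspan_def by auto

lemma cspan_superset: "B \<subseteq> cspan B"
  unfolding cspan_def by auto

lemma cspan_minimal: "csubspace S \<Longrightarrow> B \<subseteq> S \<Longrightarrow> cspan B \<subseteq> S"
  unfolding cspan_def by auto

context
  fixes S :: "('a \<Rightarrow>\<^sub>0 complex) set"
  assumes S: "csubspace S"
begin

lemma csubspace_0: "0 \<in> S"
  and csubspace_add: "x \<in> S \<Longrightarrow> y \<in> S \<Longrightarrow> x + y \<in> S"
  and csubspace_smul: "x \<in> S \<Longrightarrow> smul c x \<in> S"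
  using S by (simp_all add: csubspace_def)

lemma csubspace_minus: "x \<in> S \<Longrightarrow> - x \<in> S"
  using csubspace_smul[of x "-1"] by (simp add: smul_minus_left)

lemma csubspace_diff: "x \<in> S \<Longrightarrow> y \<in> S \<Longrightarrow> x - y \<in> S"
  by (metis csubspace_add csubspace_minus diff_conv_add_uminus)

lemma csubspace_sum: "(\<And>a. a \<in> A \<Longrightarrow> f a \<in> S) \<Longrightarrow> sum f A \<in> S"
  by (induction A rule: infinite_finite_induct) (auto intro: csubspace_0 csubspace_add)

end

lemma csubspace_vimage:
  assumes "\<And>x y. L (x + y) = L x + L y" "\<And>c x. L (smul c x) = smul c (L x)" "csubspace S"
  shows "csubspace {x. L x \<in> S}"
proof -
  have "L 0 = 0" using assms(2)[of 0 0] by simp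
  then show ?thesis using assms unfolding csubspace_def by auto
qed

lemma cspan_induct [consumes 1, case_names csubspace base]:
  assumes "x \<in> cspan B" "csubspace {x. P x}" "\<And>x. x \<in> B \<Longrightarrow> P x"
  shows "P x"
  using assms cspan_minimal[of "{x. P x}" B] by blast

definition linext ::
  "('a \<Rightarrow> ('b \<Rightarrow>\<^sub>0 complex)) \<Rightarrow> ('a \<Rightarrow>\<^sub>0 complex) \<Rightarrow> ('b \<Rightarrow>\<^sub>0 complex)" where
  "linext f p = (\<Sum>a\<in>keys p. smul (lookup p a) (f a))"

definition linform :: "('a \<Rightarrow> complex) \<Rightarrow> ('a \<Rightarrow>\<^sub>0 complex) \<Rightarrow> complex" where
  "linform l p = (\<Sum>a\<in>keys p. lookup p a * l a)"

lemma linext_superset: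
  "finite S \<Longrightarrow> keys p \<subseteq> S \<Longrightarrow> linext f p = (\<Sum>a\<in>S. smul (lookup p a) (f a))"
  unfolding linext_def by (rule sum.mono_neutral_left) (auto simp: in_keys_iff)

lemma linform_superset:
  "finite S \<Longrightarrow> keys p \<subseteq> S \<Longrightarrow> linform l p = (\<Sum>a\<in>S. lookup p a * l a)"
  unfolding linform_def by (rule sum.mono_neutral_left) (auto simp: in_keys_iff)

lemma linext_add: "linext f (p + r) = linext f p + linext f r"
proof -
  let ?S = "keys p \<union> keys r"
  have "linext f (p + r) = (\<Sum>a\<in>?S. smul (lookup (p + r) a) (f a))"
    by (rule linext_superset) (auto simp: keys_add)
  also have "\<dots> = (\<Sum>a\<in>?S. smul (lookup p a) (f a)) + (\<Sum>a\<in>?S. smul (lookup r a) (f a))"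
    by (simp add: lookup_add smul_add_left sum.distrib)
  also have "\<dots> = linext f p + linext f r"
    by (simp add: linext_superset[symmetric])
  finally show ?thesis .
qed

lemma linform_add: "linform l (p + r) = linform l p + linform l r"
proof -
  let ?S = "keys p \<union> keys r"
  have "linform l (p + r) = (\<Sum>a\<in>?S. lookup (p + r) a * l a)"
    by (rule linform_superset) (auto simp: keys_add)
  also have "\<dots> = (\<Sum>a\<in>?S. lookup p a * l a) + (\<Sum>a\<in>?S. lookup r a * l a)"
    by (simp add: lookup_add algebra_simps sum.distrib)
  also have "\<dots> = linform l p + linform l r"
    by (simp add: linform_superset[symmetric])
  finally show ?thesis .
qed

lemma linext_zero [simp]: "linext f 0 = 0"
  by (simp add: linext_def)

lemma linext_single [simp]: "linext f (single a c) = smul c (f a)"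
  by (cases "c = 0") (auto simp: linext_def)

lemma linext_smul: "linext f (smul c p) = smul c (linext f p)"
  by (induction p rule: poly_mapping_induct) (auto simp: smul_add linext_add)

lemma linext_diff: "linext f (p - r) = linext f p - linext f r"
  by (metis add_diff_cancel linext_add diff_add_cancel)

lemma linext_cong: "(\<And>a. a \<in> keys p \<Longrightarrow> f a = g a) \<Longrightarrow> linext f p = linext g p"
  by (simp add: linext_def)

lemma linext_fun_zero [simp]: "linext (\<lambda>a. 0) p = 0"
  by (simp add: linext_def)

lemma linext_fun_add: "linext (\<lambda>a. f a + g a) p = linext f p + linext g p"
  by (simp add: linext_def smul_add sum.distrib)

lemma linext_fun_sum: "linext (\<lambda>a. \<Sum>i\<in>I. f i a) p = (\<Sum>i\<in>I. linext (f i) p)"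
  by (induction I rule: infinite_finite_induct) (auto simp: linext_fun_add linext_def)

lemma linext_fun_smul: "linext (\<lambda>a. smul c (f a)) p = smul c (linext f p)"
  by (induction p rule: poly_mapping_induct) (auto simp: smul_add linext_add mult.commute)

lemma linext_linext: "linext f (linext g p) = linext (\<lambda>a. linext f (g a)) p"
  by (induction p rule: poly_mapping_induct) (auto simp: linext_add linext_smul)

lemma linext_in_csubspace:
  "csubspace S \<Longrightarrow> (\<And>a. a \<in> keys p \<Longrightarrow> f a \<in> S) \<Longrightarrow> linext f p \<in> S"
  unfolding linext_def by (auto intro!: csubspace_sum csubspace_smul)

lemma linform_zero [simp]: "linform l 0 = 0"
  by (simp add: linform_def)

lemma linform_single [simp]: "linform l (single a c) = c * l a"
  by (cases "c = 0") (auto simp: linform_def)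

lemma linform_smul: "linform l (smul c p) = c * linform l p"
  by (induction p rule: poly_mapping_induct) (auto simp: linform_add smul_add algebra_simps)

lemma linform_diff: "linform l (p - r) = linform l p - linform l r"
  by (metis add_diff_cancel linform_add diff_add_cancel)

lemma linform_linext: "linform l (linext g p) = linform (\<lambda>a. linform l (g a)) p"
  by (induction p rule: poly_mapping_induct) (auto simp: linext_add linform_add linform_smul)

lemma linext_smul_const: "linext (\<lambda>a. smul (l a) x) p = smul (linform l p) x"
  by (induction p rule: poly_mapping_induct) (auto simp: linext_add linform_add smul_add_left)

lemma double_sum_eq_linext:
  "(\<Sum>u\<in>keys p. \<Sum>v\<in>keys r. single (h u v) (lookup p u * lookup r v))
     = linext (\<lambda>u. linext (\<lambda>v. single (h u v) 1) r) p"
  unfolding linext_def by (simp add: smul_sum)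

section \<open>The free algebra as a monoid algebra\<close>

text \<open>With concatenation as the monoid operation on words, the library's convolution
  product on finitely supported functions is the product of the free algebra and of its
  tensor square.\<close>

instantiation list :: (type) monoid_add
begin
definition zero_list_def: "0 = []"
definition plus_list_def: "xs + ys = xs @ ys"
instance by standard (auto simp: zero_list_def plus_list_def)
end

lemma smul_eq_single_zero_mult: "smul c p = single 0 c * (p :: ('a::monoid_add) \<Rightarrow>\<^sub>0 complex)"
  by (induction p rule: poly_mapping_induct) (auto simp: smul_add distrib_left mult_single)

lemma smul_eq_mult_single_zero: "smul c p = (p :: ('a::monoid_add) \<Rightarrow>\<^sub>0 complex) * single 0 c"
  by (induction p rule: poly_mapping_induct) (auto simp: smul_add distrib_right mult_single mult.commute)

lemma mult_smul_left: "smul c p * r = smul c ((p :: ('a::monoid_add) \<Rightarrow>\<^sub>0 complex) * r)"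
  by (simp add: smul_eq_single_zero_mult mult.assoc)

lemma mult_smul_right: "p * smul c r = smul c ((p :: ('a::monoid_add) \<Rightarrow>\<^sub>0 complex) * r)"
  by (simp add: smul_eq_mult_single_zero mult.assoc)

lemma mult_eq_linext:
  "(p :: ('a::monoid_add) \<Rightarrow>\<^sub>0 complex) * r = linext (\<lambda>u. linext (\<lambda>v. single (u + v) 1) r) p"
proof (induction p rule: poly_mapping_induct)
  case (single a c)
  show ?case
    by (induction r rule: poly_mapping_induct) (auto simp: distrib_left linext_add smul_add mult_single)
qed (auto simp: distrib_right linext_add)

lemma amult_eq_mult: "p \<cdot> r = p * r"
  unfolding amult_def double_sum_eq_linext mult_eq_linext by (simp add: plus_list_def)

lemma tmult_eq_mult: "tmult p r = p * r"
  unfolding tmult_def double_sum_eq_linext mult_eq_linext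
  by (simp add: plus_list_def plus_prod_def case_prod_beta)

lemma tens_eq_linext: "tens x y = linext (\<lambda>u. linext (\<lambda>v. single (u, v) 1) y) x"
  unfolding tens_def double_sum_eq_linext ..

lemma wd_append: "wd (u @ v) = wd u * wd v"
  by (simp add: wd_def mult_single plus_list_def)

lemma wd_Nil: "wd [] = 1"
  by (simp add: wd_def zero_list_def[symmetric])

lemma smul_wd: "smul c (wd w) = single w c"
  by (simp add: wd_def)

lemma linform_wd [simp]: "linform l (wd w) = l w"
  by (simp add: wd_def)

lemma Delta_eq_linext: "Delta s p = linext (Delta_word s) p"
  by (simp add: Delta_def linext_def)

instantiation nzc :: comm_monoid_mult
begin
definition one_nzc_def: "1 = Abs_nzc 1"
definition times_nzc_def: "a * b = nzc_mult a b"
lemma Rep_nzc_nonzero [simp]: "Rep_nzc a \<noteq> 0"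
  using Rep_nzc[of a] by simp
lemma Rep_nzc_times [simp]: "Rep_nzc (a * b) = Rep_nzc a * Rep_nzc b"
  unfolding times_nzc_def nzc_mult_def by (simp add: Abs_nzc_inverse)
lemma Rep_nzc_one [simp]: "Rep_nzc 1 = 1"
  unfolding one_nzc_def by (simp add: Abs_nzc_inverse)
instance by standard (auto simp: Rep_nzc_inject[symmetric])
end

lemma nzc_eq_iff: "a = b \<longleftrightarrow> Rep_nzc a = Rep_nzc b"
  by (simp add: Rep_nzc_inject)

lemma Rep_nzc_of [simp]: "z \<noteq> 0 \<Longrightarrow> Rep_nzc (nzc_of z) = z"
  by (simp add: nzc_of_def Abs_nzc_inverse)

lemma Rep_nzc_power [simp]: "Rep_nzc (a ^ n) = Rep_nzc a ^ n"
  by (induction n) auto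

lemma nzc_mult_eq_times: "nzc_mult a b = a * b"
  by (simp add: times_nzc_def)

lemma nzc_of_1: "nzc_of 1 = 1"
  by (simp add: nzc_of_def one_nzc_def)

section \<open>The PBW module\<close>

text \<open>The index (i, m, j, k) stands for the PBW monomial F^i f_m E^j G^k with undivided
  powers.\<close>

type_synonym pbw_index = "nat \<times> nzc \<times> nat \<times> nat"
type_synonym pbw_vec = "pbw_index \<Rightarrow>\<^sub>0 complex"

definition ef_scale :: "complex \<Rightarrow> complex" where
  "ef_scale q = inverse (q - inverse q)"

definition even_power_sum :: "complex \<Rightarrow> nat \<Rightarrow> complex" where
  "even_power_sum x i = (\<Sum>u<i. x ^ (2 * u))"

lemma even_power_sum_simps [simp]:
  "even_power_sum x 0 = 0" "even_power_sum x (Suc i) = even_power_sum x i + x ^ (2 * i)"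
  by (simp_all add: even_power_sum_def)

text \<open>The product of a generator with a PBW monomial, straightened with the defining
  relations; for E this is
  E F^i = F^i E + F^(i-1) (\<Sum>u<i. q^(-2u) f_q - \<Sum>u<i. q^(2u) f_(1/q)) / (q - 1/q), q = s^2.\<close>

fun gen_action :: "complex \<Rightarrow> gen \<Rightarrow> pbw_index \<Rightarrow> pbw_vec" where
  "gen_action s GF (i, m, j, k) = single (Suc i, m, j, k) 1"
| "gen_action s (Gf n) (i, m, j, k) = single (i, n * m, j, k) (inverse (Rep_nzc n ^ (2 * i)))"
| "gen_action s GG (i, m, j, k) =
     single (i, m, j, Suc k) 1 + single (i, m, j, k) (2 * of_nat j - 2 * of_nat i)"
| "gen_action s GE (i, m, j, k) =
     single (i, m, Suc j, k) (inverse (Rep_nzc m ^ 2))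
     + single (i - 1, nzc_of (s^2) * m, j, k)
         (ef_scale (s^2) * even_power_sum (inverse (s^2)) i)
     - single (i - 1, nzc_of (inverse (s^2)) * m, j, k)
         (ef_scale (s^2) * even_power_sum (s^2) i)"

abbreviation gen_act :: "complex \<Rightarrow> gen \<Rightarrow> pbw_vec \<Rightarrow> pbw_vec" where
  "gen_act s g \<equiv> linext (gen_action s g)"

definition word_act :: "complex \<Rightarrow> gen list \<Rightarrow> pbw_vec \<Rightarrow> pbw_vec" where
  "word_act s w v = foldr (gen_act s) w v"

definition alg_act :: "complex \<Rightarrow> falg \<Rightarrow> pbw_vec \<Rightarrow> pbw_vec" where
  "alg_act s p v = linext (\<lambda>w. word_act s w v) p"

definition pbw_coords :: "complex \<Rightarrow> falg \<Rightarrow> pbw_vec" where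
  "pbw_coords s p = alg_act s p (single (0, 1, 0, 0) 1)"

lemma word_act_Nil [simp]: "word_act s [] v = v"
  and word_act_Cons [simp]: "word_act s (g # w) v = gen_act s g (word_act s w v)"
  and word_act_append: "word_act s (u @ w) v = word_act s u (word_act s w v)"
  by (simp_all add: word_act_def)

lemma word_act_add: "word_act s w (x + y) = word_act s w x + word_act s w y"
  by (induction w) (auto simp: linext_add)

lemma word_act_smul: "word_act s w (smul c x) = smul c (word_act s w x)"
  by (induction w) (auto simp: linext_smul)

lemma word_act_zero [simp]: "word_act s w 0 = 0"
  by (induction w) auto

lemma alg_act_add: "alg_act s (p + r) v = alg_act s p v + alg_act s r v"
  and alg_act_diff: "alg_act s (p - r) v = alg_act s p v - alg_act s r v"
  and alg_act_smul: "alg_act s (smul c p) v = smul c (alg_act s p v)"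
  and alg_act_single [simp]: "alg_act s (single w c) v = smul c (word_act s w v)"
  and alg_act_wd [simp]: "alg_act s (wd w) v = word_act s w v"
  and alg_act_zero [simp]: "alg_act s 0 v = 0"
  and alg_act_vec_zero [simp]: "alg_act s p 0 = 0"
  by (simp_all add: alg_act_def linext_add linext_diff linext_smul wd_def)

lemma alg_act_vec_add: "alg_act s p (x + y) = alg_act s p x + alg_act s p y"
  by (simp add: alg_act_def word_act_add linext_fun_add)

lemma alg_act_vec_smul: "alg_act s p (smul c x) = smul c (alg_act s p x)"
  by (simp add: alg_act_def word_act_smul linext_fun_smul)

lemma alg_act_mult: "alg_act s (p * r) v = alg_act s p (alg_act s r v)"
proof (induction p rule: poly_mapping_induct)
  case (single a c)
  show ?case
  proof (induction r rule: poly_mapping_induct)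
    case (single b d)
    then show ?case by (simp add: mult_single plus_list_def word_act_append word_act_smul)
  qed (auto simp: distrib_left alg_act_add alg_act_vec_add word_act_add)
qed (auto simp: distrib_right alg_act_add)

lemma pbw_coords_add: "pbw_coords s (x + y) = pbw_coords s x + pbw_coords s y"
  and pbw_coords_smul: "pbw_coords s (smul c x) = smul c (pbw_coords s x)"
  and pbw_coords_zero [simp]: "pbw_coords s 0 = 0"
  by (simp_all add: pbw_coords_def alg_act_add alg_act_smul)

lemma pbw_coords_sum: "pbw_coords s (sum f A) = (\<Sum>a\<in>A. pbw_coords s (f a))"
  by (induction A rule: infinite_finite_induct) (auto simp: pbw_coords_add)

fun normal_word :: "pbw_index \<Rightarrow> gen list" where
  "normal_word (i, m, j, k) = replicate i GF @ Gf m # replicate j GE @ replicate k GG"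

lemma word_act_G_power: "word_act s (replicate k GG) (single (0, 1, 0, 0) 1) = single (0, 1, 0, k) 1"
  by (induction k) (auto simp: linext_add)

lemma word_act_E_power: "word_act s (replicate j GE) (single (0, 1, 0, k) 1) = single (0, 1, j, k) 1"
  by (induction j) auto

lemma word_act_F_power: "word_act s (replicate i GF) (single (i0, m, j, k) 1) = single (i0 + i, m, j, k) 1"
  by (induction i) auto

lemma word_act_f_power:
  "word_act s (replicate n (Gf a)) (single (0, m, j, k) 1) = single (0, a ^ n * m, j, k) 1"
  by (induction n) (auto simp: mult.assoc)

lemma pbw_coords_normal_word: "pbw_coords s (wd (normal_word b)) = single b 1"
  by (cases b) (simp add: pbw_coords_def word_act_append word_act_G_power word_act_E_power word_act_F_power)

definition pbw_lift :: "pbw_vec \<Rightarrow> falg" where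
  "pbw_lift v = linext (\<lambda>b. wd (normal_word b)) v"

lemma pbw_lift_add: "pbw_lift (x + y) = pbw_lift x + pbw_lift y"
  and pbw_lift_smul: "pbw_lift (smul c x) = smul c (pbw_lift x)"
  and pbw_lift_zero [simp]: "pbw_lift 0 = 0"
  by (simp_all add: pbw_lift_def linext_add linext_smul)

locale generic_parameter =
  fixes s :: complex
  assumes s_nonzero: "s \<noteq> 0"
    and s_not_root_of_unity: "n > 0 \<Longrightarrow> s ^ n \<noteq> 1"
begin

lemma Rep_nzc_of_param [simp]:
  "Rep_nzc (nzc_of s) = s" "Rep_nzc (nzc_of (inverse s)) = inverse s"
  "Rep_nzc (nzc_of (s^2)) = s^2" "Rep_nzc (nzc_of (inverse (s^2))) = inverse (s^2)"
  using s_nonzero by auto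

lemma nzc_of_q_neq [simp]:
  "nzc_of (s^2) \<noteq> 1" "nzc_of (inverse (s^2)) \<noteq> 1"
  "nzc_of (s^2) \<noteq> nzc_of (inverse (s^2))" "nzc_of (inverse (s^2)) \<noteq> nzc_of (s^2)"
proof -
  have "s^2 \<noteq> 1" "s^2 * s^2 \<noteq> 1"
    using s_not_root_of_unity[of 2] s_not_root_of_unity[of 4]
    by (simp_all flip: power_add)
  then show "nzc_of (s^2) \<noteq> 1" "nzc_of (inverse (s^2)) \<noteq> 1"
    "nzc_of (s^2) \<noteq> nzc_of (inverse (s^2))" "nzc_of (inverse (s^2)) \<noteq> nzc_of (s^2)"
    using s_nonzero by (auto simp: nzc_eq_iff field_simps)
qed

lemma gen_action_f_f: "gen_act s (Gf a) (gen_action s (Gf n) b) = gen_action s (Gf (a * n)) b"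
  by (cases b) (simp add: ac_simps power_mult_distrib)

lemma gen_action_f_one: "gen_action s (Gf 1) b = single b 1"
  by (cases b) simp

lemma gen_action_f_E:
  "gen_act s (Gf a) (gen_action s GE b) = smul (Rep_nzc a ^ 2) (gen_act s GE (gen_action s (Gf a) b))"
  by (cases b; cases "fst b"; simp add: linext_add linext_diff smul_add smul_diff;
      auto intro!: poly_mapping_eqI simp: lookup_add lookup_minus lookup_single when_def
        field_simps mult.left_commute power_mult_distrib power2_eq_square)

lemma gen_action_f_F:
  "gen_act s (Gf a) (gen_action s GF b) = smul (inverse (Rep_nzc a ^ 2)) (gen_act s GF (gen_action s (Gf a) b))"
  by (cases b) (simp add: field_simps power_mult_distrib power_add power_mult power2_eq_square)

lemma gen_action_f_G: "gen_act s (Gf a) (gen_action s GG b) = gen_act s GG (gen_action s (Gf a) b)"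
  by (cases b) (simp add: linext_add smul_add field_simps)

lemma gen_action_G_E:
  "gen_act s GG (gen_action s GE b) = gen_act s GE (gen_action s GG b) + smul 2 (gen_action s GE b)"
  by (cases b; cases "fst b")
    (auto intro!: poly_mapping_eqI simp: linext_add linext_diff lookup_add lookup_minus
      lookup_single when_def algebra_simps)

lemma gen_action_G_F:
  "gen_act s GG (gen_action s GF b) = gen_act s GF (gen_action s GG b) - smul 2 (gen_action s GF b)"
  by (cases b)
    (auto intro!: poly_mapping_eqI simp: linext_add linext_diff lookup_add lookup_minus
      lookup_single when_def algebra_simps)

lemma gen_action_E_F:
  "gen_act s GE (gen_action s GF b) = gen_act s GF (gen_action s GE b)
     + smul (ef_scale (s^2))
         (gen_action s (Gf (nzc_of (s^2))) b - gen_action s (Gf (nzc_of (inverse (s^2)))) b)"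
  by (cases b; cases "fst b"; simp add: linext_add linext_diff smul_add smul_diff;
      auto intro!: poly_mapping_eqI simp: lookup_add lookup_minus lookup_single when_def
        algebra_simps power_inverse[symmetric])

lemma alg_act_rels_single: "r \<in> rels (s^2) \<Longrightarrow> alg_act s r (single b 1) = 0"
  unfolding rels_def
  by (auto simp: alg_act_add alg_act_diff alg_act_smul nzc_mult_eq_times nzc_of_1
      gen_action_f_f gen_action_f_one gen_action_f_E gen_action_f_F gen_action_f_G
      gen_action_G_E gen_action_G_F gen_action_E_F ef_scale_def smul_wd[symmetric])

lemma alg_act_rels: "r \<in> rels (s^2) \<Longrightarrow> alg_act s r v = 0"
proof (induction v rule: poly_mapping_induct)
  case (single b c)
  then show ?case
    using alg_act_vec_smul[of s r c "single b 1"] alg_act_rels_single[of r b] by simp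
qed (auto simp: alg_act_vec_add)

abbreviation I :: "falg set" where
  "I \<equiv> relideal (s^2)"

lemma csubspace_relideal: "csubspace I"
  unfolding relideal_def by (rule csubspace_cspan)

lemma word_rel_word_in_relideal: "r \<in> rels (s^2) \<Longrightarrow> wd u * r * wd v \<in> I"
  unfolding relideal_def amult_eq_mult by (rule subsetD[OF cspan_superset]) blast

lemma rels_in_relideal: "r \<in> rels (s^2) \<Longrightarrow> r \<in> I"
  using word_rel_word_in_relideal[of r "[]" "[]"] by (simp add: wd_Nil)

lemma mult_in_relideal_by_singles:
  assumes "\<And>a c b d. single a c * x * single b d \<in> I"
  shows "p * x * r \<in> I"
proof (induction p rule: poly_mapping_induct)
  case (single a c)
  show ?case
    by (induction r rule: poly_mapping_induct)
      (auto simp: distrib_left assms csubspace_0 csubspace_add csubspace_relideal)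
qed (auto simp: distrib_right csubspace_0 csubspace_add csubspace_relideal)

lemma relideal_mult:
  assumes "z \<in> I"
  shows "p * z * r \<in> I"
  using assms[unfolded relideal_def]
proof (induction z rule: cspan_induct)
  case csubspace
  show ?case
    using csubspace_relideal
    by (auto simp: csubspace_def distrib_left distrib_right mult_smul_left mult_smul_right)
next
  case (base z)
  then obtain u v g where g: "g \<in> rels (s^2)" and z: "z = wd u * g * wd v"
    by (auto simp: amult_eq_mult)
  show ?case
  proof (rule mult_in_relideal_by_singles)
    fix a b c d
    have "single a c * z * single b d = smul (d * c) (wd (a @ u) * g * wd (v @ b))"
      by (simp add: z smul_wd[symmetric] mult_smul_left mult_smul_right wd_append mult.assoc)
    also have "\<dots> \<in> I"
      by (rule csubspace_smul[OF csubspace_relideal word_rel_word_in_relideal[OF g]])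
    finally show "single a c * z * single b d \<in> I" .
  qed
qed

lemma pbw_coords_relideal:
  assumes "z \<in> I"
  shows "pbw_coords s z = 0"
  using assms[unfolded relideal_def]
proof (induction z rule: cspan_induct)
  case csubspace
  show ?case
    by (auto simp: csubspace_def pbw_coords_add pbw_coords_smul)
next
  case (base z)
  then show ?case
    by (auto simp: amult_eq_mult pbw_coords_def alg_act_mult alg_act_rels)
qed

section \<open>Straightening words modulo the relations\<close>

abbreviation nz_q :: nzc where
  "nz_q \<equiv> nzc_of (s^2)"
abbreviation nz_q_inv :: nzc where
  "nz_q_inv \<equiv> nzc_of (inverse (s^2))"

definition mod_span :: "gen list set \<Rightarrow> falg set" where
  "mod_span S = cspan (wd ` S \<union> I)"

lemma csubspace_mod_span: "csubspace (mod_span S)"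
  unfolding mod_span_def by (rule csubspace_cspan)

lemma relideal_in_mod_span: "z \<in> I \<Longrightarrow> z \<in> mod_span S"
  unfolding mod_span_def by (rule subsetD[OF cspan_superset]) simp

lemma wd_in_mod_span: "w \<in> S \<Longrightarrow> wd w \<in> mod_span S"
  unfolding mod_span_def by (rule subsetD[OF cspan_superset]) simp

lemma smul_wd_in_mod_span: "w \<in> S \<Longrightarrow> smul c (wd w) \<in> mod_span S"
  by (rule csubspace_smul[OF csubspace_mod_span wd_in_mod_span])

lemma mod_span_trans:
  assumes "x \<in> mod_span S" "\<And>w. w \<in> S \<Longrightarrow> wd w \<in> mod_span T"
  shows "x \<in> mod_span T"
proof -
  have "cspan (wd ` S \<union> I) \<subseteq> mod_span T"
    using assms(2) relideal_in_mod_span by (intro cspan_minimal[OF csubspace_mod_span]) blast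
  then show ?thesis using assms(1) unfolding mod_span_def[of S] by blast
qed

lemma mod_span_mono: "S \<subseteq> T \<Longrightarrow> x \<in> mod_span S \<Longrightarrow> x \<in> mod_span T"
  using mod_span_trans wd_in_mod_span by blast

lemma mod_span_mult:
  assumes "x \<in> mod_span S"
  shows "wd u * x * wd v \<in> mod_span ((\<lambda>w. u @ w @ v) ` S)"
  using assms[unfolded mod_span_def]
proof (induction x rule: cspan_induct)
  case csubspace
  show ?case
    using csubspace_mod_span
    by (auto simp: csubspace_def distrib_left distrib_right mult_smul_left mult_smul_right)
next
  case (base x)
  then consider (word) w where "w \<in> S" "x = wd w" | (rel) "x \<in> I"
    by blast
  then show ?case
  proof cases
    case word
    then show ?thesis
      by (simp add: wd_in_mod_span flip: wd_append)
  next
    case rel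
    then show ?thesis
      by (intro relideal_in_mod_span relideal_mult)
  qed
qed

lemma mod_span_context:
  assumes "wd w \<in> mod_span S" "L = u @ w @ v" "\<And>x. x \<in> S \<Longrightarrow> wd (u @ x @ v) \<in> mod_span T"
  shows "wd L \<in> mod_span T"
  using mod_span_mult[OF assms(1), of u v] assms(2,3)
  by (auto simp: wd_append mult.assoc intro: mod_span_trans)

lemma mod_span_by_relation: "x - y \<in> I \<Longrightarrow> y \<in> mod_span T \<Longrightarrow> x \<in> mod_span T"
  using csubspace_add[OF csubspace_mod_span relideal_in_mod_span] by fastforce

lemma relation_in_relideal:
  "wd [Gf a, Gf b] - wd [Gf (a * b)] \<in> I"
  "wd [Gf 1] - wd [] \<in> I"
  "wd [Gf m, GE] - smul (Rep_nzc m ^ 2) (wd [GE, Gf m]) \<in> I"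
  "wd [Gf m, GF] - smul (inverse (Rep_nzc m ^ 2)) (wd [GF, Gf m]) \<in> I"
  "wd [Gf m, GG] - wd [GG, Gf m] \<in> I"
  "wd [GG, GE] - wd [GE, GG] - smul 2 (wd [GE]) \<in> I"
  "wd [GG, GF] - wd [GF, GG] + smul 2 (wd [GF]) \<in> I"
  "wd [GE, GF] - wd [GF, GE] - smul (ef_scale (s^2)) (wd [Gf nz_q] - wd [Gf nz_q_inv]) \<in> I"
proof -
  have "wd [Gf a, Gf b] - wd [Gf (nzc_mult a b)] \<in> rels (s^2)"
    unfolding rels_def by blast
  then show "wd [Gf a, Gf b] - wd [Gf (a * b)] \<in> I"
    by (simp add: rels_in_relideal nzc_mult_eq_times)
qed (auto intro!: rels_in_relideal simp: rels_def nzc_of_1 ef_scale_def)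

lemma minus_in_relideal: "x - y \<in> I \<Longrightarrow> y - x \<in> I"
  using csubspace_minus[OF csubspace_relideal] by fastforce

lemma straighten_f_f: "wd [Gf a, Gf b] \<in> mod_span {[Gf (a * b)]}"
  by (rule mod_span_by_relation[OF relation_in_relideal(1) wd_in_mod_span]) simp

lemma split_f: "wd [Gf (a * b)] \<in> mod_span {[Gf a, Gf b]}"
  by (rule mod_span_by_relation[OF minus_in_relideal[OF relation_in_relideal(1)] wd_in_mod_span]) simp

lemma Nil_in_mod_span_f_one: "wd [] \<in> mod_span {[Gf 1]}"
  by (rule mod_span_by_relation[OF minus_in_relideal[OF relation_in_relideal(2)] wd_in_mod_span]) simp

lemma straighten_E_f: "wd [GE, Gf m] \<in> mod_span {[Gf m, GE]}"
proof (rule mod_span_by_relation)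
  have "smul (- inverse (Rep_nzc m ^ 2)) (wd [Gf m, GE] - smul (Rep_nzc m ^ 2) (wd [GE, Gf m]))
     = wd [GE, Gf m] - smul (inverse (Rep_nzc m ^ 2)) (wd [Gf m, GE])"
    by (simp add: smul_diff smul_minus_left)
  then show "wd [GE, Gf m] - smul (inverse (Rep_nzc m ^ 2)) (wd [Gf m, GE]) \<in> I"
    using csubspace_smul[OF csubspace_relideal relation_in_relideal(3)] by metis
qed (simp add: smul_wd_in_mod_span)

lemma straighten_f_F: "wd [Gf m, GF] \<in> mod_span {[GF, Gf m]}"
  by (rule mod_span_by_relation[OF relation_in_relideal(4) smul_wd_in_mod_span]) simp

lemma straighten_G_f: "wd [GG, Gf m] \<in> mod_span {[Gf m, GG]}"
  by (rule mod_span_by_relation[OF minus_in_relideal[OF relation_in_relideal(5)] wd_in_mod_span]) simp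

lemma straighten_G_E: "wd [GG, GE] \<in> mod_span {[GE, GG], [GE]}"
proof (rule mod_span_by_relation)
  show "wd [GG, GE] - (wd [GE, GG] + smul 2 (wd [GE])) \<in> I"
    using relation_in_relideal(6) by (simp add: diff_diff_eq)
  show "wd [GE, GG] + smul 2 (wd [GE]) \<in> mod_span {[GE, GG], [GE]}"
    by (intro csubspace_add[OF csubspace_mod_span] wd_in_mod_span smul_wd_in_mod_span) auto
qed

lemma straighten_G_F: "wd [GG, GF] \<in> mod_span {[GF, GG], [GF]}"
proof (rule mod_span_by_relation)
  show "wd [GG, GF] - (wd [GF, GG] - smul 2 (wd [GF])) \<in> I"
    using relation_in_relideal(7) by (simp add: algebra_simps)
  show "wd [GF, GG] - smul 2 (wd [GF]) \<in> mod_span {[GF, GG], [GF]}"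
    by (intro csubspace_diff[OF csubspace_mod_span] wd_in_mod_span smul_wd_in_mod_span) auto
qed

lemma straighten_E_F: "wd [GE, GF] \<in> mod_span {[GF, GE], [Gf nz_q], [Gf nz_q_inv]}"
proof (rule mod_span_by_relation)
  show "wd [GE, GF] - (wd [GF, GE] + smul (ef_scale (s^2)) (wd [Gf nz_q] - wd [Gf nz_q_inv])) \<in> I"
    using relation_in_relideal(8) by (simp add: diff_diff_eq)
  show "wd [GF, GE] + smul (ef_scale (s^2)) (wd [Gf nz_q] - wd [Gf nz_q_inv])
      \<in> mod_span {[GF, GE], [Gf nz_q], [Gf nz_q_inv]}"
    by (intro csubspace_add[OF csubspace_mod_span] csubspace_smul[OF csubspace_mod_span]
        csubspace_diff[OF csubspace_mod_span] wd_in_mod_span) auto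
qed

lemma move_past_power:
  assumes "wd [y, x] \<in> mod_span {[x, y]}"
  shows "wd (y # replicate i x) \<in> mod_span {replicate i x @ [y]}"
proof (induction i)
  case 0
  then show ?case by (simp add: wd_in_mod_span)
next
  case (Suc i)
  show ?case
  proof (rule mod_span_context[OF assms, where u = "[]" and v = "replicate i x"])
    fix w assume "w \<in> {[x, y]}"
    then have "w = [x, y]" by simp
    show "wd ([] @ w @ replicate i x) \<in> mod_span {replicate (Suc i) x @ [y]}"
      unfolding \<open>w = [x, y]\<close>
      by (rule mod_span_context[OF Suc.IH, where u = "[x]" and v = "[]"])
        (auto intro: wd_in_mod_span)
  qed simp
qed

lemma move_past_power_with_lower:
  assumes "wd [y, x] \<in> mod_span {[x, y], [x]}"
  shows "wd (y # replicate i x) \<in> mod_span {replicate i x @ [y], replicate i x}"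
proof (induction i)
  case 0
  then show ?case by (simp add: wd_in_mod_span)
next
  case (Suc i)
  show ?case
  proof (rule mod_span_context[OF assms, where u = "[]" and v = "replicate i x"])
    fix w assume "w \<in> {[x, y], [x]}"
    then consider "w = [x, y]" | "w = [x]" by blast
    then show "wd ([] @ w @ replicate i x)
        \<in> mod_span {replicate (Suc i) x @ [y], replicate (Suc i) x}"
    proof cases
      case 1
      show ?thesis
        unfolding 1
        by (rule mod_span_context[OF Suc.IH, where u = "[x]" and v = "[]"])
          (auto intro: wd_in_mod_span)
    next
      case 2
      then show ?thesis by (auto intro: wd_in_mod_span)
    qed
  qed simp
qed

lemma straighten_E_F_power:
  "wd (GE # replicate (Suc i) GF)
     \<in> mod_span {replicate (Suc i) GF @ [GE],
          replicate i GF @ [Gf nz_q], replicate i GF @ [Gf nz_q_inv]}"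
proof (induction i)
  case 0
  then show ?case using straighten_E_F by simp
next
  case (Suc i)
  let ?T = "{replicate (Suc (Suc i)) GF @ [GE], replicate (Suc i) GF @ [Gf nz_q],
    replicate (Suc i) GF @ [Gf nz_q_inv]}"
  have f_past_F: "wd (Gf n # replicate (Suc i) GF) \<in> mod_span ?T"
    if "n = nz_q \<or> n = nz_q_inv" for n
    using that by (intro mod_span_mono[OF _ move_past_power[OF straighten_f_F]]) auto
  show ?case
  proof (rule mod_span_context[OF straighten_E_F, where u = "[]" and v = "replicate (Suc i) GF"])
    fix w assume "w \<in> {[GF, GE], [Gf nz_q], [Gf nz_q_inv]}"
    then consider "w = [GF, GE]" | "w = [Gf nz_q]" | "w = [Gf nz_q_inv]" by blast
    then show "wd ([] @ w @ replicate (Suc i) GF) \<in> mod_span ?T"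
    proof cases
      case 1
      show ?thesis
        unfolding 1
        by (rule mod_span_context[OF Suc.IH, where u = "[GF]" and v = "[]"])
          (auto intro: wd_in_mod_span)
    next
      case 2
      then show ?thesis using f_past_F[of nz_q] by simp
    next
      case 3
      then show ?thesis using f_past_F[of nz_q_inv] by simp
    qed
  qed simp
qed

abbreviation normal_span :: "falg set" where
  "normal_span \<equiv> mod_span (range normal_word)"

lemma normal_word_in_normal_span: "w = normal_word b \<Longrightarrow> wd w \<in> normal_span"
  by (rule wd_in_mod_span) simp

lemma f_times_normal_word: "wd (Gf n # normal_word (i, m, j, k)) \<in> normal_span"
proof -
  have f_f: "wd (replicate i GF @ Gf n # Gf m # replicate j GE @ replicate k GG) \<in> normal_span"
    by (rule mod_span_context[OF straighten_f_f,
          where u = "replicate i GF" and v = "replicate j GE @ replicate k GG"])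
      (auto intro: normal_word_in_normal_span[of _ "(i, n * m, j, k)"])
  show ?thesis
    by (rule mod_span_context[OF move_past_power[OF straighten_f_F, of n i],
          where u = "[]" and v = "Gf m # replicate j GE @ replicate k GG"]) (use f_f in auto)
qed

lemma G_times_normal_word: "wd (GG # normal_word (i, m, j, k)) \<in> normal_span"
proof -
  have G_past_E: "wd (replicate i GF @ Gf m # GG # replicate j GE @ replicate k GG) \<in> normal_span"
    by (rule mod_span_context[OF move_past_power_with_lower[OF straighten_G_E, of j],
          where u = "replicate i GF @ [Gf m]" and v = "replicate k GG"])
      (auto intro: normal_word_in_normal_span[of _ "(i, m, j, Suc k)"]
        normal_word_in_normal_span[of _ "(i, m, j, k)"])
  have G_past_f: "wd (replicate i GF @ GG # Gf m # replicate j GE @ replicate k GG) \<in> normal_span"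
    by (rule mod_span_context[OF straighten_G_f,
          where u = "replicate i GF" and v = "replicate j GE @ replicate k GG"]) (use G_past_E in auto)
  show ?thesis
    by (rule mod_span_context[OF move_past_power_with_lower[OF straighten_G_F, of i],
          where u = "[]" and v = "Gf m # replicate j GE @ replicate k GG"])
      (use G_past_f in \<open>auto intro: normal_word_in_normal_span[of _ "(i, m, j, k)"]\<close>)
qed

lemma E_times_normal_word: "wd (GE # normal_word (i, m, j, k)) \<in> normal_span"
proof (cases i)
  case 0
  show ?thesis
    unfolding 0
    by (rule mod_span_context[OF straighten_E_f,
          where u = "[]" and v = "replicate j GE @ replicate k GG"])
      (auto intro: normal_word_in_normal_span[of _ "(0, m, Suc j, k)"])
next
  case (Suc i')
  have E_past_f: "wd (replicate i GF @ GE # Gf m # replicate j GE @ replicate k GG) \<in> normal_span"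
    by (rule mod_span_context[OF straighten_E_f,
          where u = "replicate i GF" and v = "replicate j GE @ replicate k GG"])
      (auto intro: normal_word_in_normal_span[of _ "(i, m, Suc j, k)"])
  have f_f: "wd (replicate i' GF @ Gf n # Gf m # replicate j GE @ replicate k GG) \<in> normal_span" for n
    by (rule mod_span_context[OF straighten_f_f,
          where u = "replicate i' GF" and v = "replicate j GE @ replicate k GG"])
      (auto intro: normal_word_in_normal_span[of _ "(i', n * m, j, k)"])
  show ?thesis
    unfolding Suc
    by (rule mod_span_context[OF straighten_E_F_power[of i'],
          where u = "[]" and v = "Gf m # replicate j GE @ replicate k GG"])
      (use E_past_f f_f Suc in auto)
qed

lemma gen_times_normal_word: "wd (g # normal_word b) \<in> normal_span"
proof -
  obtain i m j k where b: "b = (i, m, j, k)"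
    by (cases b) auto
  show ?thesis
  proof (cases g)
    case GF
    then show ?thesis
      unfolding b by (intro normal_word_in_normal_span[of _ "(Suc i, m, j, k)"]) simp
  qed (use b f_times_normal_word G_times_normal_word E_times_normal_word in auto)
qed

lemma wd_in_normal_span: "wd w \<in> normal_span"
proof (induction w)
  case Nil
  show ?case
    by (rule mod_span_mono[OF _ Nil_in_mod_span_f_one])
      (auto intro: image_eqI[of _ _ "(0, 1, 0, 0)"])
next
  case (Cons g w)
  show ?case
    by (rule mod_span_context[OF Cons.IH, where u = "[g]" and v = "[]"])
      (auto intro: gen_times_normal_word)
qed

lemma in_normal_span: "x \<in> normal_span"
proof (induction x rule: poly_mapping_induct)
  case (single w c)
  show ?case
    using csubspace_smul[OF csubspace_mod_span wd_in_normal_span] by (simp add: smul_wd)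
qed (auto intro: csubspace_0 csubspace_add csubspace_mod_span)

lemma normal_form: "x - pbw_lift (pbw_coords s x) \<in> I"
proof -
  have "normal_span \<subseteq> {x. x - pbw_lift (pbw_coords s x) \<in> I}"
    unfolding mod_span_def
  proof (rule cspan_minimal)
    show "csubspace {x. x - pbw_lift (pbw_coords s x) \<in> I}"
      using csubspace_relideal unfolding csubspace_def
      by (auto simp: pbw_coords_add pbw_coords_smul pbw_lift_add pbw_lift_smul
          smul_diff[symmetric] add_diff_add)
    show "wd ` range normal_word \<union> I \<subseteq> {x. x - pbw_lift (pbw_coords s x) \<in> I}"
      using csubspace_0[OF csubspace_relideal]
      by (auto simp: pbw_coords_normal_word pbw_coords_relideal pbw_lift_def simp del: normal_word.simps)
  qed
  then show ?thesis
    using in_normal_span by blast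
qed

section \<open>The grading\<close>

text \<open>F^(i) f_\<mu> E^(j) G^(k) is a nonzero multiple of the normal word of
  (i, s^-i \<mu> s^-j, j, k), hence the degree s^(i+j) m of (i, m, j, k).\<close>

definition pbw_degree :: "pbw_index \<Rightarrow> nzc" where
  "pbw_degree b = (case b of (i, m, j, k) \<Rightarrow> m * nzc_of s ^ (i + j))"

definition homogeneous_vecs :: "nzc \<Rightarrow> pbw_vec set" where
  "homogeneous_vecs m = {v. \<forall>b\<in>keys v. pbw_degree b = m}"

lemma csubspace_homogeneous_vecs: "csubspace (homogeneous_vecs m)"
  unfolding csubspace_def homogeneous_vecs_def
  using keys_add keys_smul_subset by fastforce

lemma qint_nonzero: "t > 0 \<Longrightarrow> qint (s^2) t \<noteq> 0"
proof -
  assume t: "t > 0"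
  have "(s^2)^t * (s^2)^t \<noteq> 1" "s^2 * s^2 \<noteq> 1"
    using s_not_root_of_unity[of "4 * t"] s_not_root_of_unity[of 4] t
    by (simp_all flip: power_add power_mult)
  then show ?thesis
    using s_nonzero by (auto simp: qint_def field_simps)
qed

lemma qfact_nonzero: "qfact (s^2) n \<noteq> 0"
  unfolding qfact_def using qint_nonzero by (auto simp: prod_zero_iff)

definition pbw_scale :: "nat \<Rightarrow> nat \<Rightarrow> nat \<Rightarrow> complex" where
  "pbw_scale i j k = inverse (qfact (s^2) i * qfact (s^2) j * of_nat (fact k))"

definition pbw_word :: "nat \<Rightarrow> nzc \<Rightarrow> nat \<Rightarrow> nat \<Rightarrow> gen list" where
  "pbw_word i m j k = replicate i GF @ replicate i (Gf (nzc_of (inverse s))) @ [Gf m]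
     @ replicate j (Gf (nzc_of (inverse s))) @ replicate j GE @ replicate k GG"

lemma pbw_eq_smul_pbw_word: "pbw s i m j k = smul (pbw_scale i j k) (wd (pbw_word i m j k))"
  by (simp add: pbw_def pbw_scale_def pbw_word_def)

lemma pbw_scale_nonzero: "pbw_scale i j k \<noteq> 0"
  using qfact_nonzero by (simp add: pbw_scale_def)

lemma pbw_coords_pbw_word:
  "pbw_coords s (wd (pbw_word i m j k))
     = single (i, nzc_of (inverse s) ^ i * (m * nzc_of (inverse s) ^ j), j, k) 1"
  by (simp add: pbw_coords_def pbw_word_def word_act_append word_act_G_power word_act_E_power
      word_act_F_power word_act_f_power)

lemma pbw_degree_pbw_word_index:
  "pbw_degree (i, nzc_of (inverse s) ^ i * (m * nzc_of (inverse s) ^ j), j, k) = m"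
  using s_nonzero by (simp add: pbw_degree_def nzc_eq_iff field_simps power_add flip: power_inverse)

lemma pbw_coords_Uhom: "y \<in> Uhom s m \<Longrightarrow> pbw_coords s y \<in> homogeneous_vecs m"
  unfolding Uhom_def
proof (induction y rule: cspan_induct)
  case csubspace
  show ?case
    using csubspace_homogeneous_vecs
    by (auto simp: csubspace_def pbw_coords_add pbw_coords_smul)
next
  case (base y)
  then show ?case
    using csubspace_0[OF csubspace_homogeneous_vecs]
    by (auto simp: pbw_coords_relideal pbw_eq_smul_pbw_word pbw_coords_smul pbw_coords_pbw_word
        pbw_scale_nonzero pbw_degree_pbw_word_index homogeneous_vecs_def)
qed

lemma homogeneous_vecs_sum_eq_zero:
  assumes "finite M" "\<forall>m\<in>M. v m \<in> homogeneous_vecs m" "(\<Sum>m\<in>M. v m) = 0" "m0 \<in> M"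
  shows "v m0 = 0"
proof (rule poly_mapping_eqI)
  fix b
  have vanish: "lookup (v m) b = 0" if "m \<in> M" "m \<noteq> pbw_degree b" for m
  proof (rule ccontr)
    assume "lookup (v m) b \<noteq> 0"
    then have "b \<in> keys (v m)"
      by (simp add: in_keys_iff)
    then show False
      using assms(2) that by (auto simp: homogeneous_vecs_def)
  qed
  show "lookup (v m0) b = lookup 0 b"
  proof (cases "m0 = pbw_degree b")
    case True
    have "(\<Sum>m\<in>M - {m0}. lookup (v m) b) = 0"
      using vanish True by (intro sum.neutral) auto
    then have "lookup (v m0) b = (\<Sum>m\<in>M. lookup (v m) b)"
      by (simp add: sum.remove[OF assms(1,4)])
    also have "\<dots> = 0"
      using assms(3) by (simp flip: lookup_sum)
    finally show ?thesis by simp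
  qed (use vanish assms(4) in simp)
qed

lemma Uhom_sum_in_relideal:
  assumes "finite M" "\<forall>m\<in>M. y m \<in> Uhom s m" "(\<Sum>m\<in>M. y m) \<in> I" "m0 \<in> M"
  shows "y m0 \<in> I"
proof -
  have "(\<Sum>m\<in>M. pbw_coords s (y m)) = 0"
    using pbw_coords_relideal[OF assms(3)] by (simp add: pbw_coords_sum)
  then have "pbw_coords s (y m0) = 0"
    using assms pbw_coords_Uhom by (intro homogeneous_vecs_sum_eq_zero) auto
  then show ?thesis
    using normal_form[of "y m0"] by simp
qed

section \<open>Homogeneous components through the coproduct\<close>

definition dual_act :: "(pbw_index \<Rightarrow> complex) \<Rightarrow> gen list \<Rightarrow> pbw_index \<Rightarrow> complex" where
  "dual_act l w b = linform l (word_act s w (single b 1))"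

text \<open>The map id \<otimes> (l \<circ> pbw_coords) from A \<otimes> A to A.\<close>

definition right_slice :: "(pbw_index \<Rightarrow> complex) \<Rightarrow> falg2 \<Rightarrow> falg" where
  "right_slice l P = linext (\<lambda>(u, v). smul (linform l (pbw_coords s (wd v))) (wd u)) P"

lemma right_slice_add: "right_slice l (P + R) = right_slice l P + right_slice l R"
  and right_slice_smul: "right_slice l (smul c P) = smul c (right_slice l P)"
  and right_slice_zero [simp]: "right_slice l 0 = 0"
  and right_slice_single:
    "right_slice l (single (u, v) c) = smul (c * linform l (pbw_coords s (wd v))) (wd u)"
  by (simp_all add: right_slice_def linext_add linext_smul)

lemma linform_word_act: "linform l (word_act s w x) = linform (dual_act l w) x"
proof (induction x rule: poly_mapping_induct)
  case (single b c)
  have "word_act s w (single b c) = smul c (word_act s w (single b 1))"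
    by (simp add: word_act_smul[symmetric])
  then show ?case
    by (simp add: linform_smul dual_act_def)
qed (auto simp: word_act_add linform_add)

lemma right_slice_mult: "right_slice l (single (a, b) 1 * P) = wd a * right_slice (dual_act l b) P"
proof (induction P rule: poly_mapping_induct)
  case (single x c)
  obtain u v where x: "x = (u, v)"
    by (cases x) auto
  show ?case
    unfolding x
    by (simp add: mult_single right_slice_single plus_prod_def plus_list_def pbw_coords_def
        alg_act_mult linform_word_act mult_smul_right wd_append)
qed (auto simp: distrib_left right_slice_add)

lemma dual_act_Nil [simp]: "dual_act l [] = l"
  by (simp add: dual_act_def fun_eq_iff)

lemma dual_act_gen: "dual_act l [g] = (\<lambda>b. linform l (gen_action s g b))"
  by (simp add: dual_act_def fun_eq_iff)

text \<open>Only the slice i = 0 of the functional is constrained here: transporting it along E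
  does not preserve vanishing for i > 0, but at i = 0 the lowering part of E is absent.\<close>

lemma right_slice_Delta_G_power:
  assumes "\<And>m j k. j > 0 \<or> k > 0 \<Longrightarrow> l (0, m, j, k) = 0"
  shows "right_slice l (Delta_word s (replicate k GG)) = smul (l (0, 1, 0, 0)) (wd (replicate k GG))"
  using assms
proof (induction k arbitrary: l)
  case 0
  then show ?case by (simp add: right_slice_single pbw_coords_def)
next
  case (Suc k)
  have vanish: "dual_act l [GG] (0, m, j, k') = 0" if "j > 0 \<or> k' > 0" for m j k'
    using Suc.prems that by (simp add: dual_act_gen linform_add)
  have "right_slice (dual_act l [GG]) (Delta_word s (replicate k GG)) = 0"
    using Suc.IH[of "dual_act l [GG]", OF vanish] by (simp add: dual_act_gen linform_add Suc.prems)
  then have "right_slice l (Delta_word s (replicate (Suc k) GG))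
      = wd [GG] * smul (l (0, 1, 0, 0)) (wd (replicate k GG))"
    using Suc.IH[of l, OF Suc.prems]
    by (simp add: tmult_eq_mult Delta_gen_def distrib_right right_slice_add right_slice_mult)
  then show ?case
    by (simp add: mult_smul_right flip: wd_append)
qed

lemma right_slice_Delta_EG:
  assumes "\<And>m j k. j > 0 \<or> k > 0 \<Longrightarrow> l (0, m, j, k) = 0"
  shows "right_slice l (Delta_word s (replicate j GE @ replicate k GG))
    = smul (l (0, nzc_of s ^ j, 0, 0)) (wd (replicate j GE @ replicate k GG))"
  using assms
proof (induction j arbitrary: l)
  case 0
  then show ?case using right_slice_Delta_G_power by simp
next
  case (Suc j)
  have vanish_K: "dual_act l [Gf (nzc_of s)] (0, m, j', k') = 0" if "j' > 0 \<or> k' > 0" for m j' k'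
    using Suc.prems that by (simp add: dual_act_gen)
  have vanish_E: "dual_act l [GE] (0, m, j', k') = 0" for m j' k'
    using Suc.prems by (simp add: dual_act_gen linform_add linform_diff)
  have "right_slice l (Delta_word s (replicate (Suc j) GE @ replicate k GG))
      = wd [GE] * right_slice (dual_act l [Gf (nzc_of s)]) (Delta_word s (replicate j GE @ replicate k GG))
      + wd [Gf (nzc_of (inverse s))] * right_slice (dual_act l [GE]) (Delta_word s (replicate j GE @ replicate k GG))"
    by (simp add: tmult_eq_mult Delta_gen_def distrib_right right_slice_add right_slice_mult)
  also have "\<dots> = wd [GE] * smul (l (0, nzc_of s ^ Suc j, 0, 0)) (wd (replicate j GE @ replicate k GG))"
    using Suc.IH[of "dual_act l [Gf (nzc_of s)]", OF vanish_K] Suc.IH[of "dual_act l [GE]", OF vanish_E]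
      vanish_E
    by (simp add: dual_act_gen)
  finally show ?case
    by (simp add: mult_smul_right flip: wd_append)
qed

lemma right_slice_Delta_fEG:
  assumes "\<And>m j k. j > 0 \<or> k > 0 \<Longrightarrow> l (0, m, j, k) = 0"
  shows "right_slice l (Delta_word s (Gf n # replicate j GE @ replicate k GG))
    = smul (l (0, n * nzc_of s ^ j, 0, 0)) (wd (Gf n # replicate j GE @ replicate k GG))"
proof -
  have vanish: "dual_act l [Gf n] (0, m, j', k') = 0" if "j' > 0 \<or> k' > 0" for m j' k'
    using assms that by (simp add: dual_act_gen)
  have "right_slice l (Delta_word s (Gf n # replicate j GE @ replicate k GG))
      = wd [Gf n] * right_slice (dual_act l [Gf n]) (Delta_word s (replicate j GE @ replicate k GG))"
    by (simp add: tmult_eq_mult Delta_gen_def right_slice_mult)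
  then show ?thesis
    using right_slice_Delta_EG[of "dual_act l [Gf n]", OF vanish]
    by (simp add: dual_act_gen mult_smul_right flip: wd_append)
qed

lemma right_slice_Delta_normal_word:
  assumes "\<And>i m j k. i > 0 \<or> j > 0 \<or> k > 0 \<Longrightarrow> l (i, m, j, k) = 0"
  shows "right_slice l (Delta_word s (normal_word (i, n, j, k)))
    = smul (l (0, pbw_degree (i, n, j, k), 0, 0)) (wd (normal_word (i, n, j, k)))"
  using assms
proof (induction i arbitrary: l)
  case 0
  then show ?case
    using right_slice_Delta_fEG[of l n j k] by (simp add: pbw_degree_def)
next
  case (Suc i)
  have vanish_K: "dual_act l [Gf (nzc_of s)] (i', m, j', k') = 0"
    if "i' > 0 \<or> j' > 0 \<or> k' > 0" for i' m j' k'
    using Suc.prems that by (simp add: dual_act_gen)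
  have vanish_F: "dual_act l [GF] (i', m, j', k') = 0" for i' m j' k'
    using Suc.prems by (simp add: dual_act_gen)
  have "right_slice l (Delta_word s (GF # normal_word (i, n, j, k)))
      = wd [GF] * right_slice (dual_act l [Gf (nzc_of s)]) (Delta_word s (normal_word (i, n, j, k)))
      + wd [Gf (nzc_of (inverse s))] * right_slice (dual_act l [GF]) (Delta_word s (normal_word (i, n, j, k)))"
    by (simp add: tmult_eq_mult Delta_gen_def distrib_right right_slice_add right_slice_mult
        del: normal_word.simps)
  also have "\<dots> = wd [GF] * smul (l (0, pbw_degree (Suc i, n, j, k), 0, 0)) (wd (normal_word (i, n, j, k)))"
    using Suc.IH[of "dual_act l [Gf (nzc_of s)]", OF vanish_K] Suc.IH[of "dual_act l [GF]", OF vanish_F]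
      vanish_F
    by (simp add: dual_act_gen pbw_degree_def mult.assoc mult.left_commute del: normal_word.simps)
  finally show ?case
    by (simp add: mult_smul_right flip: wd_append)
qed

definition f_coeff :: "nzc \<Rightarrow> pbw_index \<Rightarrow> complex" where
  "f_coeff n b = (if b = (0, n, 0, 0) then 1 else 0)"

lemma right_slice_f_coeff_Delta_normal_word:
  "right_slice (f_coeff n) (Delta_word s (normal_word b))
    = (if pbw_degree b = n then wd (normal_word b) else 0)"
proof -
  obtain i m j k where b: "b = (i, m, j, k)"
    by (cases b) auto
  show ?thesis
    unfolding b
    by (subst right_slice_Delta_normal_word) (auto simp: f_coeff_def simp del: normal_word.simps)
qed

lemma right_slice_tens_wd: "right_slice l (tens y (wd w)) = smul (linform l (pbw_coords s (wd w))) y"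
proof -
  have "right_slice l (tens y (wd w)) = linext (\<lambda>u. smul (linform l (pbw_coords s (wd w))) (wd u)) y"
    by (simp add: tens_eq_linext wd_def right_slice_def linext_linext)
  also have "\<dots> = smul (linform l (pbw_coords s (wd w))) y"
    by (induction y rule: poly_mapping_induct) (auto simp: linext_add smul_add mult.commute smul_wd)
  finally show ?thesis .
qed

lemma right_slice_tens_relideal:
  assumes "z \<in> I"
  shows "right_slice l (tens (wd w) z) = 0"
proof -
  have "right_slice l (tens (wd w) z) = linext (\<lambda>v. smul (linform l (pbw_coords s (wd v))) (wd w)) z"
    by (simp add: tens_eq_linext wd_def right_slice_def linext_linext)
  also have "\<dots> = smul (linform l (pbw_coords s z)) (wd w)"
    by (simp add: linext_smul_const pbw_coords_def alg_act_def linform_linext)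
  finally show ?thesis
    using pbw_coords_relideal[OF assms] by simp
qed

lemma right_slice_Delta_right_coideal:
  assumes X: "right_coideal s X" and "x \<in> X"
  shows "right_slice l (Delta s x) \<in> X"
proof -
  have "Delta s x \<in> cspan ({tens y (wd w) | y w. y \<in> X} \<union> {tens (wd w) z | w z. z \<in> I})"
    using assms by (simp add: right_coideal_def)
  then show ?thesis
  proof (induction rule: cspan_induct)
    case csubspace
    show ?case
      using X by (intro csubspace_vimage) (auto simp: right_coideal_def right_slice_add right_slice_smul)
  next
    case (base P)
    then show ?case
      using X by (auto simp: right_coideal_def right_slice_tens_wd right_slice_tens_relideal
          csubspace_smul csubspace_0)
  qed
qed

lemma split_f_power_left: "wd [Gf (a ^ n * b)] \<in> mod_span {replicate n (Gf a) @ [Gf b]}"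
proof (induction n)
  case 0
  then show ?case by (simp add: wd_in_mod_span)
next
  case (Suc n)
  show ?case
  proof (rule mod_span_trans[OF split_f[of a "a ^ n * b"], simplified mult.assoc[symmetric] power_Suc[symmetric]])
    fix w assume "w \<in> {[Gf a, Gf (a ^ n * b)]}"
    then have "w = [Gf a, Gf (a ^ n * b)]" by simp
    show "wd w \<in> mod_span {replicate (Suc n) (Gf a) @ [Gf b]}"
      unfolding \<open>w = _\<close>
      by (rule mod_span_context[OF Suc.IH, where u = "[Gf a]" and v = "[]"]) (auto intro: wd_in_mod_span)
  qed
qed

lemma split_f_power_right: "wd [Gf (b * a ^ n)] \<in> mod_span {Gf b # replicate n (Gf a)}"
proof (induction n)
  case 0
  then show ?case by (simp add: wd_in_mod_span)
next
  case (Suc n)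
  show ?case
  proof (rule mod_span_trans[OF split_f[of "b * a ^ n" a], simplified mult.assoc power_Suc2[symmetric]])
    fix w assume "w \<in> {[Gf (b * a ^ n), Gf a]}"
    then have "w = [Gf (b * a ^ n), Gf a]" by simp
    show "wd w \<in> mod_span {Gf b # replicate (Suc n) (Gf a)}"
      unfolding \<open>w = _\<close>
      by (rule mod_span_context[OF Suc.IH, where u = "[]" and v = "[Gf a]"])
        (auto intro: wd_in_mod_span simp: replicate_append_same[symmetric])
  qed
qed

lemma csubspace_Uhom: "csubspace (Uhom s m)"
  unfolding Uhom_def by (rule csubspace_cspan)

lemma relideal_in_Uhom: "z \<in> I \<Longrightarrow> z \<in> Uhom s m"
  unfolding Uhom_def by (rule subsetD[OF cspan_superset]) simp

lemma mod_span_subset_Uhom: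
  assumes "x \<in> mod_span S" "\<And>w. w \<in> S \<Longrightarrow> wd w \<in> Uhom s m"
  shows "x \<in> Uhom s m"
proof -
  have "wd ` S \<union> I \<subseteq> Uhom s m"
    using assms(2) relideal_in_Uhom by blast
  then show ?thesis
    using assms(1) cspan_minimal[OF csubspace_Uhom] unfolding mod_span_def by blast
qed

lemma pbw_word_Uhom: "wd (pbw_word i m j k) \<in> Uhom s m"
proof -
  have "pbw s i m j k \<in> Uhom s m"
    unfolding Uhom_def by (rule subsetD[OF cspan_superset]) blast
  then have "smul (inverse (pbw_scale i j k)) (pbw s i m j k) \<in> Uhom s m"
    by (rule csubspace_smul[OF csubspace_Uhom])
  then show ?thesis
    using pbw_scale_nonzero by (simp add: pbw_eq_smul_pbw_word)
qed

lemma normal_word_Uhom: "wd (normal_word b) \<in> Uhom s (pbw_degree b)"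
proof -
  obtain i n j k where b: "b = (i, n, j, k)"
    by (cases b) auto
  define m where "m = pbw_degree b"
  let ?K = "nzc_of (inverse s)"
  have n: "n = ?K ^ i * (m * ?K ^ j)"
    unfolding m_def b using s_nonzero
    by (simp add: pbw_degree_def nzc_eq_iff field_simps power_add flip: power_inverse)
  have split_right: "wd [Gf (m * ?K ^ j)] \<in> mod_span {Gf m # replicate j (Gf ?K)}"
    by (rule split_f_power_right)
  have split_n: "wd [Gf n] \<in> mod_span {replicate i (Gf ?K) @ [Gf m] @ replicate j (Gf ?K)}"
    unfolding n
  proof (rule mod_span_trans[OF split_f_power_left])
    fix w assume "w \<in> {replicate i (Gf ?K) @ [Gf (m * ?K ^ j)]}"
    then have "w = replicate i (Gf ?K) @ [Gf (m * ?K ^ j)]" by simp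
    show "wd w \<in> mod_span {replicate i (Gf ?K) @ [Gf m] @ replicate j (Gf ?K)}"
      unfolding \<open>w = _\<close>
      by (rule mod_span_context[OF split_right, where u = "replicate i (Gf ?K)" and v = "[]"])
        (auto intro: wd_in_mod_span)
  qed
  have "wd (normal_word b) \<in> mod_span {pbw_word i m j k}"
    unfolding b
    by (rule mod_span_context[OF split_n, where u = "replicate i GF"
          and v = "replicate j GE @ replicate k GG"]) (auto intro: wd_in_mod_span simp: pbw_word_def)
  then show ?thesis
    unfolding m_def[symmetric] by (rule mod_span_subset_Uhom) (auto intro: pbw_word_Uhom)
qed

lemma Delta_pbw_lift: "Delta s (pbw_lift v) = linext (\<lambda>b. Delta_word s (normal_word b)) v"
  by (simp add: Delta_eq_linext pbw_lift_def linext_linext wd_def)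

lemma right_slice_linext: "right_slice l (linext g v) = linext (\<lambda>b. right_slice l (g b)) v"
  unfolding right_slice_def by (rule linext_linext)

lemma homogeneous_decomposition:
  assumes X: "right_coideal s X" and x: "x \<in> X"
  shows "\<exists>M y. finite M \<and> (\<forall>m\<in>M. y m \<in> X \<inter> Uhom s m) \<and> x = (\<Sum>m\<in>M. y m)"
proof -
  have csubspace_X: "csubspace X" and relideal_X: "I \<subseteq> X"
    using X by (auto simp: right_coideal_def)
  define v where "v = pbw_coords s x"
  define z where "z = x - pbw_lift v"
  have z: "z \<in> I"
    unfolding z_def v_def by (rule normal_form)
  have "x - z \<in> X"
    using csubspace_diff[OF csubspace_X x] relideal_X z by blast
  then have lift_X: "pbw_lift v \<in> X"
    by (simp add: z_def)
  define y where "y n = linext (\<lambda>b. if pbw_degree b = n then wd (normal_word b) else 0) v" for n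
  have y_X: "y n \<in> X" for n
  proof -
    have "right_slice (f_coeff n) (Delta s (pbw_lift v)) = y n"
      unfolding Delta_pbw_lift right_slice_linext y_def
      by (rule linext_cong) (simp add: right_slice_f_coeff_Delta_normal_word del: normal_word.simps)
    then show ?thesis
      using right_slice_Delta_right_coideal[OF X lift_X, of "f_coeff n"] by simp
  qed
  have y_Uhom: "y n \<in> Uhom s n" for n
    unfolding y_def
    by (rule linext_in_csubspace[OF csubspace_Uhom])
      (auto intro: normal_word_Uhom csubspace_0[OF csubspace_Uhom] simp del: normal_word.simps)
  define M where "M = insert 1 (pbw_degree ` keys v)"
  define Y where "Y n = y n + (if n = 1 then z else 0)" for n
  have "finite M"
    unfolding M_def by simp
  have "Y m \<in> X \<inter> Uhom s m" for m
    unfolding Y_def using y_X y_Uhom z relideal_X relideal_in_Uhom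
    by (auto intro!: csubspace_add[OF csubspace_X] csubspace_add[OF csubspace_Uhom]
        csubspace_0[OF csubspace_X] csubspace_0[OF csubspace_Uhom])
  moreover have "(\<Sum>m\<in>M. y m) = pbw_lift v"
    unfolding y_def pbw_lift_def linext_fun_sum[symmetric]
    by (rule linext_cong) (auto simp: M_def simp del: normal_word.simps)
  then have "x = (\<Sum>m\<in>M. Y m)"
    using \<open>finite M\<close> by (simp add: Y_def sum.distrib z_def M_def)
  ultimately show ?thesis
    using \<open>finite M\<close> by blast
qed

end

lemma algebraic_root_of_unity:
  fixes z :: complex
  assumes "n > 0" "z ^ n = 1"
  shows "algebraic z"
proof (rule algebraicI[of "monom 1 n - 1"])
  show "coeff (monom 1 n - 1) i \<in> \<int>" for i
    by (simp add: coeff_monom coeff_1)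
  have "coeff (monom 1 n - 1 :: complex poly) n = 1"
    using assms(1) by (simp add: coeff_1)
  then show "monom 1 n - 1 \<noteq> (0 :: complex poly)"
    by (metis coeff_0 zero_neq_one)
  show "poly (monom 1 n - 1) z = 0"
    using assms(2) by (simp add: poly_monom)
qed

lemma generic_parameter_sqrt:
  assumes "\<not> algebraic q" "s ^ 2 = q"
  shows "generic_parameter s"
proof
  show "s \<noteq> 0"
    using assms by auto
  show "s ^ n \<noteq> 1" if "n > 0" for n
  proof
    assume "s ^ n = 1"
    moreover have "q ^ n = (s ^ n) ^ 2"
      by (simp flip: assms(2) power_mult add: mult.commute)
    ultimately have "q ^ n = 1"
      by simp
    then show False
      using algebraic_root_of_unity[OF that] assms(1) by blast
  qed
qed

theorem corollary4p2:
  fixes q s :: complex and Xt :: "falg set"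
  assumes "\<not> algebraic q"
    and "s ^ 2 = q"
    and "right_coideal s Xt"
  shows "(\<forall>x\<in>Xt. \<exists>M y. finite M \<and> (\<forall>m\<in>M. y m \<in> Xt \<inter> Uhom s m) \<and> x = (\<Sum>m\<in>M. y m))
       \<and> (\<forall>M y. finite M \<and> (\<forall>m\<in>M. y m \<in> Xt \<inter> Uhom s m) \<and> (\<Sum>m\<in>M. y m) \<in> relideal q
            \<longrightarrow> (\<forall>m\<in>M. y m \<in> relideal q))"
proof -
  interpret generic_parameter s
    using generic_parameter_sqrt[OF assms(1,2)] .
  show ?thesis
    unfolding assms(2)[symmetric]
    using homogeneous_decomposition[OF assms(3)] Uhom_sum_in_relideal by blast
qed

end
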